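(* Let $f:\mathbf{R}^d\times\mathbf{R}^n\to\mathbf{R}^d$ be Lipschitz continuous in the state variable with constant $L$, i.e. $\|f(x,a)-f(x',a)\|\le L\|x-x'\|$ for all $x,x'\in\mathbf{R}^d$ and all actions $a$, and odd in the action variable, i.e. $f(x,-a)=-f(x,a)$ for all $x,a$. Let $c>0$ and let $a:[0,2]\to[-c,c]^n$ be an action signal, and let $x:[0,2]\to\mathbf{R}^d$ be a solution of $\dot x(t)=f(x(t),a(t))$. Assume that $a(1+t)=-a(1-t)$ for all $t\in[0,1]$. Then $x(2-t)=x(t)$ for all $t\in[0,1]$.
   Context: This models teleoperation with a learned action map: $x(t)\in\mathbf{R}^d$ is the robot state (joint configuration), $a(t)\in\mathbf{R}^n$ with $n\ll d$ is the user's low-dimensional action, taking values in the bounded symmetric domain $[-c,c]^n$, and $f$ maps states and actions to state velocities, so the system evolves by $\dot x(t)=f(x(t),a(t))$. *)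

theory Defs
  imports "HOL-Analysis.Analysis"
begin

end

theory Submission
  imports Defs
begin

text \<open>
  Reflecting the trajectory, \<open>y t = x (2 - t)\<close>, and using the antisymmetry of the action signal
  together with the oddness of \<open>f\<close>, shows that \<open>y\<close> solves the same equation
  \<open>y' = f y (a t)\<close> on \<open>[0, 1]\<close> as \<open>x\<close>, and both agree at \<open>t = 1\<close>. Their difference
  \<open>z\<close> satisfies \<open>\<parallel>z'\<parallel> \<le> L \<parallel>z\<parallel>\<close>, so \<open>exp (2 L t) \<parallel>z t\<parallel>\<^sup>2\<close> is nondecreasing; being
  nonnegative and zero at \<open>t = 1\<close>, it vanishes on \<open>[0, 1]\<close>.
\<close>

lemma has_vector_derivative_reflect:
  assumes "(x has_vector_derivative v) (at (c - t) within (\<lambda>s. c - s) ` S)"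
  shows "((\<lambda>s. x (c - s)) has_vector_derivative - v) (at t within S)"
proof -
  have "((\<lambda>s. c - s) has_vector_derivative -1) (at t within S)"
    by (auto intro!: derivative_eq_intros simp: has_vector_derivative_def)
  from vector_diff_chain_within[OF this assms] show ?thesis
    by (simp add: o_def)
qed

lemma has_real_derivative_exp_weighted_inner_self:
  fixes z :: "real \<Rightarrow> 'a::real_inner"
  assumes "(z has_vector_derivative w) (at t within S)"
  shows "((\<lambda>s. exp (k * s) * (z s \<bullet> z s)) has_real_derivative
           exp (k * t) * (k * (z t \<bullet> z t) + 2 * (z t \<bullet> w))) (at t within S)"
  using assms unfolding has_vector_derivative_def
  by (auto intro!: derivative_eq_intros
           simp: has_field_derivative_def inner_commute algebra_simps fun_eq_iff)

lemma DERIV_nonneg_within_imp_nondecreasing: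
  fixes \<phi> :: "real \<Rightarrow> real"
  assumes "a \<le> b"
    and deriv: "\<And>s. s \<in> {a..b} \<Longrightarrow> (\<phi> has_real_derivative \<phi>' s) (at s within {a..b})"
    and nonneg: "\<And>s. s \<in> {a..b} \<Longrightarrow> \<phi>' s \<ge> 0"
  shows "\<phi> a \<le> \<phi> b"
proof (rule DERIV_nonneg_imp_increasing_open[OF \<open>a \<le> b\<close>])
  show "continuous_on {a..b} \<phi>"
    using deriv by (rule DERIV_continuous_on)
  fix s assume "a < s" "s < b"
  then have "s \<in> interior {a..b}" and "s \<in> {a..b}" by auto
  then have "(\<phi> has_real_derivative \<phi>' s) (at s)"
    using deriv at_within_interior by metis
  with nonneg \<open>s \<in> {a..b}\<close> show "\<exists>y. (\<phi> has_real_derivative y) (at s) \<and> 0 \<le> y"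
    by blast
qed

lemma linearly_bounded_derivative_vanishes_backward:
  fixes z :: "real \<Rightarrow> 'a::real_inner"
  assumes deriv: "\<And>s. s \<in> {t0..t1} \<Longrightarrow> (z has_vector_derivative z' s) (at s within {t0..t1})"
    and bound: "\<And>s. s \<in> {t0..t1} \<Longrightarrow> norm (z' s) \<le> L * norm (z s)"
    and zero: "z t1 = 0"
    and t: "t \<in> {t0..t1}"
  shows "z t = 0"
proof -
  define \<phi> where "\<phi> s = exp (2 * L * s) * (z s \<bullet> z s)" for s
  define \<phi>' where "\<phi>' s = exp (2 * L * s) * (2 * L * (z s \<bullet> z s) + 2 * (z s \<bullet> z' s))" for s
  have "\<phi> t \<le> \<phi> t1"
  proof (rule DERIV_nonneg_within_imp_nondecreasing[of t t1 \<phi> \<phi>'])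
    fix s assume "s \<in> {t..t1}"
    with t have "s \<in> {t0..t1}" by auto
    show "(\<phi> has_real_derivative \<phi>' s) (at s within {t..t1})"
      using has_real_derivative_exp_weighted_inner_self[OF deriv[OF \<open>s \<in> {t0..t1}\<close>]]
      unfolding \<phi>_def[abs_def] \<phi>'_def
      by (rule has_field_derivative_subset) (use t in auto)
    have "\<bar>z s \<bullet> z' s\<bar> \<le> norm (z s) * norm (z' s)"
      by (rule Cauchy_Schwarz_ineq2)
    also have "\<dots> \<le> L * (z s \<bullet> z s)"
      using mult_left_mono[OF bound[OF \<open>s \<in> {t0..t1}\<close>] norm_ge_zero[of "z s"]]
      by (simp add: dot_square_norm power2_eq_square algebra_simps)
    finally show "\<phi>' s \<ge> 0"
      unfolding \<phi>'_def by (simp add: abs_le_iff)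
  qed (use t in auto)
  also have "\<phi> t1 = 0"
    by (simp add: \<phi>_def zero)
  finally have "z t \<bullet> z t \<le> 0"
    by (simp add: \<phi>_def mult_le_0_iff)
  then show ?thesis
    by (metis antisym inner_eq_zero_iff inner_ge_zero)
qed

theorem theorem1:
  fixes f :: "real ^ 'd \<Rightarrow> real ^ 'n \<Rightarrow> real ^ 'd"
    and L c :: real
    and a :: "real \<Rightarrow> real ^ 'n"
    and x :: "real \<Rightarrow> real ^ 'd"
  assumes lip: "\<And>y y' u. norm (f y u - f y' u) \<le> L * norm (y - y')"
    and odd: "\<And>y u. f y (- u) = - f y u"
    and c_pos: "c > 0"
    and a_bounded: "\<And>t i. t \<in> {0..2} \<Longrightarrow> \<bar>a t $ i\<bar> \<le> c"
    and sol: "\<And>t. t \<in> {0..2} \<Longrightarrow>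
                 (x has_vector_derivative f (x t) (a t)) (at t within {0..2})"
    and sym: "\<And>t. t \<in> {0..1} \<Longrightarrow> a (1 + t) = - a (1 - t)"
  shows "\<forall>t \<in> {0..1}. x (2 - t) = x t"
proof
  define y where "y t = x (2 - t)" for t
  have x_solves: "(x has_vector_derivative f (x t) (a t)) (at t within {0..1})" if "t \<in> {0..1}" for t
    using sol[of t] that by (auto intro: has_vector_derivative_within_subset)
  have y_solves: "(y has_vector_derivative f (y t) (a t)) (at t within {0..1})" if t: "t \<in> {0..1}" for t
  proof -
    have "(x has_vector_derivative f (x (2 - t)) (a (2 - t))) (at (2 - t) within (\<lambda>s. 2 - s) ` {0..1})"
      using sol[of "2 - t"] t by (auto intro: has_vector_derivative_within_subset)
    moreover have "a (2 - t) = - a t"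
      using sym[of "1 - t"] t by auto
    ultimately show ?thesis
      using has_vector_derivative_reflect odd unfolding y_def[abs_def] by fastforce
  qed
  fix t :: real assume "t \<in> {0..1}"
  have "x t - y t = 0"
  proof (rule linearly_bounded_derivative_vanishes_backward[where L = L])
    show "((\<lambda>t. x t - y t) has_vector_derivative f (x s) (a s) - f (y s) (a s)) (at s within {0..1})"
      if "s \<in> {0..1}" for s
      using x_solves[OF that] y_solves[OF that] by (rule has_vector_derivative_diff)
  qed (use lip \<open>t \<in> {0..1}\<close> in \<open>auto simp: y_def\<close>)
  then show "x (2 - t) = x t"
    by (simp add: y_def)
qed

end
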